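(* Let $\mathbb{C}[X]^*$ be the linear dual of the polynomial algebra $\mathbb{C}[X]$, endowed with the convolution product $(f*g)(X^n)=\sum_{k=0}^n\binom{n}{k}f(X^k)g(X^{n-k})$ for $n\geq 0$ (unit $\varepsilon$ with $\varepsilon(X^n)=\delta_{n,0}$), and let $\mathbb{C}[X]^{\circ}\subseteq\mathbb{C}[X]^*$ be the subalgebra of linear forms vanishing on some non-zero ideal of $\mathbb{C}[X]$. Let $J=\{f\in\mathbb{C}[X]^{\circ}\mid f(1)=0\}$. Let $\xi\in\mathbb{C}[X]^*$ be defined by $\xi(X^n)=\delta_{n,1}$, for $\lambda\in\mathbb{C}$ let $\phi_\lambda:\mathbb{C}[X]\to\mathbb{C}$ be the algebra map with $\phi_\lambda(X)=\lambda$, let $G_a=\{\phi_\lambda\mid\lambda\in\mathbb{C}\}$ (a group under convolution, $\phi_\lambda*\phi_\mu=\phi_{\lambda+\mu}$, identity $\phi_0=\varepsilon$), let $\mathbb{C}G_a$ be its group algebra with counit $\varepsilon_a(\phi_\lambda)=1$, and let $\Psi:\mathbb{C}[\xi]\otimes\mathbb{C}G_a\to\mathbb{C}[X]^{\circ}$, $\xi^n\otimes\phi_\lambda\mapsto\xi^n*\phi_\lambda$, be the (Hopf) algebra isomorphism. Then $\Psi$ induces an isomorphism of vector spaces $$\mathbb{C}\bar{\xi}\oplus\frac{\ker(\varepsilon_a)}{\ker(\varepsilon_a)^2}\cong\frac{J}{J^2},$$ where $\bar\xi=\xi+\langle\xi^2\rangle\in\langle\xi\rangle/\langle\xi^2\rangle$;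 explicitly it sends $\bar\xi\mapsto \xi+J^2$ and $x+\ker(\varepsilon_a)^2\mapsto \Psi(1\otimes x)+J^2$.
   Context: $\mathbb{C}[X]$ is the Hopf algebra with $\Delta(X)=X\otimes 1+1\otimes X$, $\varepsilon(X)=0$, $S(X)=-X$. The map $\Psi$ is known to be an isomorphism of Hopf algebras; $\mathbb{C}[\xi]$ is a polynomial algebra in $\xi$ with counit $\varepsilon_\xi(\xi)=0$, and the augmentation of $\mathbb{C}[X]^\circ$ (evaluation at $1$) corresponds under $\Psi$ to $\varepsilon_\xi\otimes\varepsilon_a$. *)

theory Defs
  imports Complex_Main "HOL-Computational_Algebra.Polynomial"
begin

text \<open>Linear forms on C[X] are identified with their values on the monomial basis:
  f :: nat => complex, f n = f(X^n).\<close>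

type_synonym dual = "nat \<Rightarrow> complex"

definition pairing :: "dual \<Rightarrow> complex poly \<Rightarrow> complex" where
  "pairing f q = (\<Sum>i\<le>degree q. coeff q i * f i)"

definition conv :: "dual \<Rightarrow> dual \<Rightarrow> dual" where
  "conv f g = (\<lambda>n. \<Sum>k\<le>n. of_nat (n choose k) * f k * g (n - k))"

definition eps :: dual where
  "eps = (\<lambda>n. if n = 0 then 1 else 0)"

fun conv_pow :: "dual \<Rightarrow> nat \<Rightarrow> dual" where
  "conv_pow f 0 = eps"
| "conv_pow f (Suc k) = conv f (conv_pow f k)"

definition poly_ideal :: "complex poly set \<Rightarrow> bool" where
  "poly_ideal I \<longleftrightarrow> 0 \<in> I \<and> (\<forall>a\<in>I. \<forall>b\<in>I. a + b \<in> I) \<and> (\<forall>a\<in>I. \<forall>q. q * a \<in> I)"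

definition sweedler :: "dual set" where
  "sweedler = {f. \<exists>I. poly_ideal I \<and> I \<noteq> {0} \<and> (\<forall>q\<in>I. pairing f q = 0)}"

definition J :: "dual set" where
  "J = {f \<in> sweedler. f 0 = 0}"

definition cspan :: "('a \<Rightarrow> complex) set \<Rightarrow> ('a \<Rightarrow> complex) set" where
  "cspan S = {y. \<exists>m (c :: nat \<Rightarrow> complex) v. (\<forall>i<m. v i \<in> S) \<and>
                  y = (\<lambda>t. \<Sum>i<m. c i * v i t)}"

definition J2 :: "dual set" where
  "J2 = cspan {conv f g | f g. f \<in> J \<and> g \<in> J}"

definition xi :: dual where
  "xi = (\<lambda>n. if n = 1 then 1 else 0)"

text \<open>phi lambda: algebra map C[X] -> C with X |-> lambda, so phi lambda (X^n) = lambda^n.\<close>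
definition phi :: "complex \<Rightarrow> dual" where
  "phi l = (\<lambda>n. l ^ n)"

text \<open>Group algebra C G_a: finitely supported functions on G_a (indexed by lambda in C),
  x = sum_lambda x(lambda) phi_lambda.\<close>
definition supp :: "('a \<Rightarrow> complex) \<Rightarrow> 'a set" where
  "supp x = {a. x a \<noteq> 0}"

definition grp_alg :: "(complex \<Rightarrow> complex) set" where
  "grp_alg = {x. finite (supp x)}"

definition ga_mult :: "(complex \<Rightarrow> complex) \<Rightarrow> (complex \<Rightarrow> complex) \<Rightarrow> (complex \<Rightarrow> complex)" where
  "ga_mult x y = (\<lambda>m. \<Sum>l\<in>supp x. x l * y (m - l))"

definition eps_a :: "(complex \<Rightarrow> complex) \<Rightarrow> complex" where
  "eps_a x = (\<Sum>l\<in>supp x. x l)"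

definition ker_a :: "(complex \<Rightarrow> complex) set" where
  "ker_a = {x \<in> grp_alg. eps_a x = 0}"

definition ker_a2 :: "(complex \<Rightarrow> complex) set" where
  "ker_a2 = cspan {ga_mult x y | x y. x \<in> ker_a \<and> y \<in> ker_a}"

text \<open>C[xi] (x) C G_a, with basis xi^n (x) phi_lambda indexed by (n, lambda):
  finitely supported functions nat * complex => complex.\<close>
definition Psi :: "(nat \<times> complex \<Rightarrow> complex) \<Rightarrow> dual" where
  "Psi t = (\<lambda>n. \<Sum>p\<in>supp t. t p * conv (conv_pow xi (fst p)) (phi (snd p)) n)"

definition one_tensor :: "(complex \<Rightarrow> complex) \<Rightarrow> (nat \<times> complex \<Rightarrow> complex)" where
  "one_tensor x = (\<lambda>(k, l). if k = 0 then x l else 0)"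

text \<open>The induced map on representatives: (c, x) |-> c xi + Psi(1 (x) x).\<close>
definition Theta :: "complex \<Rightarrow> (complex \<Rightarrow> complex) \<Rightarrow> dual" where
  "Theta c x = (\<lambda>n. c * xi n + Psi (one_tensor x) n)"

end

theory Submission
  imports Defs "HOL-Computational_Algebra.Polynomial_FPS"
    "HOL-Computational_Algebra.Fundamental_Theorem_Algebra"
begin

text \<open>
  Send a linear form \<open>f\<close> to its exponential generating function
  \<open>\<Sum>\<^sub>n f(X^n) t^n / n!\<close>. This turns convolution into the product of power series,
  \<open>\<xi>\<close> into \<open>t\<close> and \<open>\<phi>\<^sub>\<lambda>\<close> into \<open>exp(\<lambda> t)\<close>. A form lies in the Sweedler dual iff it
  satisfies a linear recurrence, i.e. iff its generating function is a quasi-polynomial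
  \<open>\<Sum> c t^k exp(m t)\<close>, and these monomials are linearly independent. Hence two functionals
  are well defined on quasi-polynomials: the coefficient of \<open>t\<close> summed over all \<open>m\<close>, which
  is a derivation at the augmentation, and the part with \<open>k = 0\<close>, which is a ring
  homomorphism onto the group algebra. On \<open>J\<^sup>2\<close> the first vanishes and the second lands in
  \<open>ker(\<epsilon>\<^sub>a)\<^sup>2\<close>. Conversely, an element of \<open>J\<close> minus its \<open>t\<close>- and \<open>exp(m t)\<close>-terms is
  \<open>t\<close> times a sum of elements of \<open>J\<close>, hence lies in \<open>J\<^sup>2\<close>.
\<close>

unbundle fps_syntax

section \<open>Exponential generating functions\<close>

definition egf :: "dual \<Rightarrow> complex fps" where
  "egf f = Abs_fps (\<lambda>n. f n / fact n)"

definition of_egf :: "complex fps \<Rightarrow> dual" where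
  "of_egf F = (\<lambda>n. fact n * F $ n)"

lemma egf_nth [simp]: "egf f $ n = f n / fact n"
  by (simp add: egf_def)

lemma of_egf_egf [simp]: "of_egf (egf f) = f"
  by (simp add: of_egf_def)

lemma egf_of_egf [simp]: "egf (of_egf F) = F"
  by (rule fps_ext) (simp add: of_egf_def)

lemma egf_inject: "egf f = egf g \<longleftrightarrow> f = g"
  by (metis of_egf_egf)

lemma egf_conv: "egf (conv f g) = egf f * egf g"
proof (rule fps_ext)
  fix n
  have "(egf f * egf g) $ n = (\<Sum>k\<le>n. f k / fact k * (g (n - k) / fact (n - k)))"
    by (simp add: fps_mult_nth atLeast0AtMost)
  also have "\<dots> = (\<Sum>k\<le>n. of_nat (n choose k) * f k * g (n - k)) / fact n"
    unfolding sum_divide_distrib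
    by (intro sum.cong refl) (simp add: binomial_fact field_simps)
  finally show "egf (conv f g) $ n = (egf f * egf g) $ n"
    by (simp add: conv_def)
qed

lemma egf_eps: "egf eps = 1"
  by (rule fps_ext) (simp add: eps_def)

lemma egf_xi: "egf xi = fps_X"
  by (rule fps_ext) (simp add: xi_def fps_X_def)

lemma conv_eps_left: "conv eps f = f"
  by (simp flip: egf_inject add: egf_conv egf_eps)

lemma egf_diff: "egf (\<lambda>n. f n - g n) = egf f - egf g"
  by (rule fps_ext) (simp add: diff_divide_distrib)

lemma egf_add: "egf (\<lambda>n. f n + g n) = egf f + egf g"
  by (rule fps_ext) (simp add: add_divide_distrib)

lemma egf_lincomb: "egf (\<lambda>n. \<Sum>i\<in>I. a i * f i n) = (\<Sum>i\<in>I. fps_const (a i) * egf (f i))"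
  by (rule fps_ext) (simp add: fps_sum_nth sum_divide_distrib)

section \<open>Quasi-polynomials\<close>

text \<open>A list \<open>[(c\<^sub>1, k\<^sub>1, m\<^sub>1), \<dots>]\<close> represents \<open>\<Sum>\<^sub>i c\<^sub>i t^k\<^sub>i exp(m\<^sub>i t)\<close>.\<close>

type_synonym qrep = "(complex \<times> nat \<times> complex) list"

definition qterm :: "complex \<times> nat \<times> complex \<Rightarrow> complex fps" where
  "qterm = (\<lambda>(c, k, m). fps_const c * fps_X ^ k * fps_exp m)"

definition qval :: "qrep \<Rightarrow> complex fps" where
  "qval xs = sum_list (map qterm xs)"

definition qterm_mult ::
    "complex \<times> nat \<times> complex \<Rightarrow> complex \<times> nat \<times> complex \<Rightarrow> complex \<times> nat \<times> complex" where
  "qterm_mult = (\<lambda>(c, k, m) (c', k', m'). (c * c', k + k', m + m'))"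

definition qprod :: "qrep \<Rightarrow> qrep \<Rightarrow> qrep" where
  "qprod xs ys = concat (map (\<lambda>x. map (qterm_mult x) ys) xs)"

definition qscale :: "complex \<Rightarrow> qrep \<Rightarrow> qrep" where
  "qscale a xs = map (\<lambda>(c, k, m). (a * c, k, m)) xs"

lemma qval_Nil [simp]: "qval [] = 0"
  by (simp add: qval_def)

lemma qval_Cons [simp]: "qval (x # xs) = qterm x + qval xs"
  by (simp add: qval_def)

lemma qval_append [simp]: "qval (xs @ ys) = qval xs + qval ys"
  by (simp add: qval_def)

lemma qterm_mult: "qterm (qterm_mult x y) = qterm x * qterm y"
  by (cases x; cases y)
    (simp add: qterm_def qterm_mult_def fps_exp_add_mult power_add algebra_simps
      flip: fps_const_mult)

lemma qval_qprod: "qval (qprod xs ys) = qval xs * qval ys"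
proof -
  have "qval (map (qterm_mult x) ys) = qterm x * qval ys" for x
    by (induction ys) (simp_all add: qterm_mult algebra_simps)
  then show ?thesis
    by (induction xs) (simp_all add: qprod_def algebra_simps)
qed

lemma qval_qscale: "qval (qscale a xs) = fps_const a * qval xs"
  by (induction xs) (auto simp: qscale_def qterm_def algebra_simps simp flip: fps_const_mult)

definition quasi_poly :: "complex fps \<Rightarrow> bool" where
  "quasi_poly F \<longleftrightarrow> (\<exists>xs. F = qval xs)"

lemma quasi_poly_0: "quasi_poly 0"
  unfolding quasi_poly_def by (metis qval_Nil)

lemma quasi_poly_add: "quasi_poly F \<Longrightarrow> quasi_poly G \<Longrightarrow> quasi_poly (F + G)"
  unfolding quasi_poly_def by (metis qval_append)

lemma quasi_poly_mult: "quasi_poly F \<Longrightarrow> quasi_poly G \<Longrightarrow> quasi_poly (F * G)"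
  unfolding quasi_poly_def by (metis qval_qprod)

lemma quasi_poly_scale: "quasi_poly F \<Longrightarrow> quasi_poly (fps_const a * F)"
  unfolding quasi_poly_def by (metis qval_qscale)

lemma fps_const_minus_one: "fps_const (-1 :: 'a::ring_1) = -1"
  by (rule fps_ext) simp

lemma quasi_poly_diff:
  assumes "quasi_poly F" "quasi_poly G"
  shows "quasi_poly (F - G)"
proof -
  have "F - G = F + fps_const (-1) * G"
    by (simp only: fps_const_minus_one mult_minus1 diff_conv_add_uminus)
  then show ?thesis
    using assms quasi_poly_add quasi_poly_scale by metis
qed

lemma quasi_poly_monomial: "quasi_poly (fps_X ^ k * fps_exp m)"
  unfolding quasi_poly_def by (rule exI[of _ "[(1, k, m)]"]) (simp add: qterm_def)

lemma quasi_poly_exp: "quasi_poly (fps_exp m)"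
  using quasi_poly_monomial[of 0 m] by simp

lemma quasi_poly_X: "quasi_poly fps_X"
  using quasi_poly_monomial[of 1 0] by simp

lemma quasi_poly_1: "quasi_poly 1"
  using quasi_poly_monomial[of 0 0] by simp

lemma quasi_poly_sum: "(\<And>i. i \<in> I \<Longrightarrow> quasi_poly (F i)) \<Longrightarrow> quasi_poly (\<Sum>i\<in>I. F i)"
  by (induction I rule: infinite_finite_induct) (auto intro: quasi_poly_0 quasi_poly_add)

section \<open>Linear independence of the monomials \<open>t^k exp(m t)\<close>\<close>

definition deriv_minus :: "complex \<Rightarrow> complex fps \<Rightarrow> complex fps" where
  "deriv_minus a F = fps_deriv F - fps_const a * F"

definition pderiv_plus :: "complex \<Rightarrow> complex poly \<Rightarrow> complex poly" where
  "pderiv_plus c p = pderiv p + smult c p"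

lemma deriv_minus_add: "deriv_minus a (F + G) = deriv_minus a F + deriv_minus a G"
  by (simp add: deriv_minus_def algebra_simps)

lemma deriv_minus_sum: "deriv_minus a (\<Sum>i\<in>I. F i) = (\<Sum>i\<in>I. deriv_minus a (F i))"
  by (simp add: deriv_minus_def fps_deriv_sum sum_subtractf sum_distrib_left)

lemma deriv_minus_poly_exp:
  "deriv_minus a (fps_of_poly p * fps_exp v) = fps_of_poly (pderiv_plus (v - a) p) * fps_exp v"
  by (simp add: deriv_minus_def pderiv_plus_def fps_deriv_mult fps_of_poly_pderiv
      fps_of_poly_add fps_of_poly_smult algebra_simps flip: fps_const_sub)

lemma deriv_minus_funpow_sum_poly_exp:
  "(deriv_minus a ^^ n) (\<Sum>v\<in>M. fps_of_poly (p v) * fps_exp v)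
     = (\<Sum>v\<in>M. fps_of_poly ((pderiv_plus (v - a) ^^ n) (p v)) * fps_exp v)"
  by (induction n) (simp_all add: deriv_minus_sum deriv_minus_poly_exp)

lemma funpow_deriv_minus_0: "(deriv_minus a ^^ n) 0 = 0"
  by (induction n) (simp_all add: deriv_minus_def)

lemma funpow_pderiv_eq_0:
  fixes p :: "'a::{comm_semiring_1,semiring_no_zero_divisors} poly"
  shows "degree p < n \<Longrightarrow> (pderiv ^^ n) p = 0"
  by (intro poly_eqI) (simp add: coeff_higher_pderiv coeff_eq_0)

lemma pderiv_plus_0_funpow: "(pderiv_plus 0 ^^ n) p = (pderiv ^^ n) p"
  by (induction n) (simp_all add: pderiv_plus_def)

lemma pderiv_plus_eq_0D:
  assumes "c \<noteq> 0" "pderiv_plus c p = 0"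
  shows "p = 0"
proof (rule ccontr)
  assume p: "p \<noteq> 0"
  have "coeff (pderiv_plus c p) (degree p) = c * lead_coeff p"
    by (simp add: pderiv_plus_def coeff_pderiv coeff_eq_0)
  with assms p show False
    by simp
qed

lemma funpow_pderiv_plus_eq_0D: "c \<noteq> 0 \<Longrightarrow> (pderiv_plus c ^^ n) p = 0 \<Longrightarrow> p = 0"
  by (induction n) (auto dest: pderiv_plus_eq_0D)

text \<open>
  Applying \<open>(D - a)^n\<close> with \<open>n > deg p\<^sub>a\<close> kills the \<open>exp(a t)\<close>-term and acts injectively
  on the others.
\<close>

lemma sum_poly_exp_eq_0D:
  fixes p :: "complex \<Rightarrow> complex poly"
  assumes "finite M" "(\<Sum>v\<in>M. fps_of_poly (p v) * fps_exp v) = 0" "v \<in> M"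
  shows "p v = 0"
  using assms
proof (induction M arbitrary: p v rule: finite_induct)
  case (insert a M)
  define n where "n = Suc (degree (p a))"
  have "(deriv_minus a ^^ n) (\<Sum>v\<in>insert a M. fps_of_poly (p v) * fps_exp v) = 0"
    using insert.prems(1) funpow_deriv_minus_0 by simp
  then have "(\<Sum>v\<in>insert a M. fps_of_poly ((pderiv_plus (v - a) ^^ n) (p v)) * fps_exp v) = 0"
    by (simp only: deriv_minus_funpow_sum_poly_exp)
  moreover have "(pderiv_plus (a - a) ^^ n) (p a) = 0"
    by (simp add: n_def pderiv_plus_0_funpow funpow_pderiv_eq_0 del: funpow.simps)
  ultimately have "(\<Sum>v\<in>M. fps_of_poly ((pderiv_plus (v - a) ^^ n) (p v)) * fps_exp v) = 0"
    using insert.hyps by simp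
  then have "(pderiv_plus (v - a) ^^ n) (p v) = 0" if "v \<in> M" for v
    using insert.IH[of "\<lambda>v. (pderiv_plus (v - a) ^^ n) (p v)"] that by blast
  then have pM: "p v = 0" if "v \<in> M" for v
    using that insert.hyps(2) funpow_pderiv_plus_eq_0D[of "v - a"] by fastforce
  then have "fps_of_poly (p a) * fps_exp a = 0"
    using insert.prems(1) insert.hyps by simp
  then have "p a = 0"
    by (simp add: fps_of_poly_eq_iff[of _ 0, simplified])
  with pM insert.prems(2) show ?case
    by auto
qed simp

definition qexps :: "qrep \<Rightarrow> complex set" where
  "qexps xs = (\<lambda>(c, k, m). m) ` set xs"

definition qcoeff :: "nat \<Rightarrow> complex \<Rightarrow> qrep \<Rightarrow> complex" where
  "qcoeff k v xs = sum_list (map (\<lambda>(c, k', m). if k' = k \<and> m = v then c else 0) xs)"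

definition qpoly :: "qrep \<Rightarrow> complex \<Rightarrow> complex poly" where
  "qpoly xs v = sum_list (map (\<lambda>(c, k, m). if m = v then monom c k else 0) xs)"

lemma finite_qexps [simp]: "finite (qexps xs)"
  by (simp add: qexps_def)

lemma qexps_Cons [simp]: "qexps ((c, k, m) # xs) = insert m (qexps xs)"
  by (simp add: qexps_def)

lemma qcoeff_Nil [simp]: "qcoeff k v [] = 0"
  by (simp add: qcoeff_def)

lemma qcoeff_Cons [simp]:
  "qcoeff k v ((c, k', m) # xs) = (if k' = k \<and> m = v then c else 0) + qcoeff k v xs"
  by (simp add: qcoeff_def)

lemma qcoeff_append [simp]: "qcoeff k v (xs @ ys) = qcoeff k v xs + qcoeff k v ys"
  by (simp add: qcoeff_def)

lemma qcoeff_qscale [simp]: "qcoeff k v (qscale a xs) = a * qcoeff k v xs"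
  by (induction xs) (auto simp: qscale_def algebra_simps)

lemma coeff_qpoly: "coeff (qpoly xs v) k = qcoeff k v xs"
  by (induction xs) (auto simp: qpoly_def coeff_monom)

lemma qval_eq_sum_qpoly:
  assumes "finite M" "qexps xs \<subseteq> M"
  shows "qval xs = (\<Sum>v\<in>M. fps_of_poly (qpoly xs v) * fps_exp v)"
  using assms(2)
proof (induction xs)
  case (Cons x xs)
  obtain c k m where x: "x = (c, k, m)"
    by (cases x) auto
  with Cons.prems have "m \<in> M" "qexps xs \<subseteq> M"
    by auto
  have "(\<Sum>v\<in>M. fps_of_poly (if m = v then monom c k else 0) * fps_exp v)
      = (\<Sum>v\<in>M. if m = v then fps_of_poly (monom c k) * fps_exp v else 0)"
    by (rule sum.cong) auto
  also have "\<dots> = qterm x"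
    using \<open>m \<in> M\<close> assms(1) by (simp add: x qterm_def fps_of_poly_monom)
  finally show ?case
    using Cons.IH[OF \<open>qexps xs \<subseteq> M\<close>]
    by (simp add: x qpoly_def fps_of_poly_add distrib_right sum.distrib)
qed (simp add: qpoly_def)

lemma qcoeff_eq_0_if_qval_eq_0:
  assumes "qval xs = 0"
  shows "qcoeff k v xs = 0"
proof -
  let ?M = "insert v (qexps xs)"
  have "(\<Sum>v\<in>?M. fps_of_poly (qpoly xs v) * fps_exp v) = 0"
    using qval_eq_sum_qpoly[of ?M xs] assms by auto
  then have "qpoly xs v = 0"
    by (intro sum_poly_exp_eq_0D[of ?M]) auto
  then show ?thesis
    using coeff_qpoly[of xs v k] by simp
qed

lemma qcoeff_unique:
  assumes "qval xs = qval ys"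
  shows "qcoeff k v xs = qcoeff k v ys"
proof -
  have "qval (xs @ qscale (-1) ys) = 0"
    by (simp only: qval_append qval_qscale fps_const_minus_one assms) simp
  then show ?thesis
    using qcoeff_eq_0_if_qval_eq_0 by fastforce
qed

lemma sum_qcoeff:
  fixes \<phi> :: "complex \<Rightarrow> complex \<Rightarrow> 'b::comm_monoid_add"
  assumes "finite M" "qexps xs \<subseteq> M"
    and "\<And>v. \<phi> v 0 = 0" "\<And>v a b. \<phi> v (a + b) = \<phi> v a + \<phi> v b"
  shows "(\<Sum>v\<in>M. \<phi> v (qcoeff k v xs)) = sum_list (map (\<lambda>(c, k', m). if k' = k then \<phi> m c else 0) xs)"
  using assms(2)
proof (induction xs)
  case (Cons x xs)
  obtain c k' m where x: "x = (c, k', m)"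
    by (cases x) auto
  with Cons.prems have "m \<in> M" "qexps xs \<subseteq> M"
    by auto
  have "(\<Sum>v\<in>M. \<phi> v (if k' = k \<and> m = v then c else 0)) = (if k' = k then \<phi> m c else 0)"
    using \<open>m \<in> M\<close> assms(1,3) by (simp add: if_distrib[of "\<phi> _"] cong: if_cong)
  then show ?case
    using Cons.IH[OF \<open>qexps xs \<subseteq> M\<close>] by (simp add: x assms(4) sum.distrib)
qed (simp add: assms(3))

section \<open>The Sweedler dual consists of the quasi-polynomial generating functions\<close>

lemma pairing_eq_sum: "degree q \<le> N \<Longrightarrow> pairing f q = (\<Sum>i\<le>N. coeff q i * f i)"
  unfolding pairing_def by (rule sum.mono_neutral_left) (auto simp: coeff_eq_0)

lemma pairing_add: "pairing f (p + q) = pairing f p + pairing f q"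
proof -
  have "degree (p + q) \<le> max (degree p) (degree q)"
    by (rule degree_add_le) auto
  then show ?thesis
    by (simp add: pairing_eq_sum[of _ "max (degree p) (degree q)"] distrib_right sum.distrib)
qed

lemma pairing_smult: "pairing f (smult a p) = a * pairing f p"
  by (simp add: pairing_eq_sum[of _ "degree p"] sum_distrib_left algebra_simps)

lemma pairing_pCons_0: "pairing f (pCons 0 q) = pairing (\<lambda>n. f (Suc n)) q"
proof -
  have "pairing f (pCons 0 q) = (\<Sum>i\<le>Suc (degree q). coeff (pCons 0 q) i * f i)"
    by (rule pairing_eq_sum) (simp add: degree_pCons_le)
  also have "\<dots> = (\<Sum>i\<le>degree q. coeff q i * f (Suc i))"
    by (subst sum.atMost_Suc_shift) simp
  finally show ?thesis
    by (simp add: pairing_def)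
qed

lemma pairing_lincomb: "pairing (\<lambda>n. a * f n + b * g n) q = a * pairing f q + b * pairing g q"
  by (simp add: pairing_def sum.distrib sum_distrib_left algebra_simps)

lemma pairing_monom: "pairing f (monom a m) = a * f m"
proof -
  have "(\<Sum>i\<le>m. coeff (monom a m) i * f i) = (\<Sum>i\<le>m. if i = m then a * f i else 0)"
    by (rule sum.cong) (auto simp: coeff_monom)
  then show ?thesis
    by (simp add: pairing_eq_sum[of _ m] degree_monom_le)
qed

lemma pairing_mult_linear: "pairing f (r * [:-m, 1:]) = pairing (\<lambda>n. f (Suc n) - m * f n) r"
proof -
  have "r * [:-m, 1:] = pCons 0 r + smult (-m) r"
    by (simp add: mult_pCons_right)
  then have "pairing f (r * [:-m, 1:]) = pairing (\<lambda>n. 1 * f (Suc n) + (-m) * f n) r"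
    by (simp only: pairing_add pairing_smult pairing_pCons_0 pairing_lincomb) simp
  then show ?thesis
    by simp
qed

definition annihilates :: "complex poly \<Rightarrow> dual \<Rightarrow> bool" where
  "annihilates q f \<longleftrightarrow> (\<forall>r. pairing f (r * q) = 0)"

lemma annihilates_linear_factor_iff:
  "annihilates ([:-m, 1:] * q) f \<longleftrightarrow> annihilates q (\<lambda>n. f (Suc n) - m * f n)"
  unfolding annihilates_def by (metis mult.assoc mult.commute pairing_mult_linear)

lemma annihilates_mult: "annihilates q f \<Longrightarrow> annihilates (p * q) f"
  unfolding annihilates_def by (metis mult.assoc)

lemma annihilates_add: "annihilates q f \<Longrightarrow> annihilates q g \<Longrightarrow> annihilates q (\<lambda>n. f n + g n)"
  unfolding annihilates_def using pairing_lincomb[of 1 f 1 g] by simp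

lemma annihilates_zero: "annihilates q (\<lambda>n. 0)"
  unfolding annihilates_def pairing_def by simp

lemma sweedler_iff_annihilates: "f \<in> sweedler \<longleftrightarrow> (\<exists>q. q \<noteq> 0 \<and> annihilates q f)"
proof
  assume "f \<in> sweedler"
  then obtain I where I: "poly_ideal I" "I \<noteq> {0}" "\<forall>q\<in>I. pairing f q = 0"
    by (auto simp: sweedler_def)
  then obtain q where "q \<in> I" "q \<noteq> 0"
    by (auto simp: poly_ideal_def)
  with I have "annihilates q f"
    by (auto simp: annihilates_def poly_ideal_def)
  with \<open>q \<noteq> 0\<close> show "\<exists>q. q \<noteq> 0 \<and> annihilates q f"
    by blast
next
  assume "\<exists>q. q \<noteq> 0 \<and> annihilates q f"
  then obtain q where q: "q \<noteq> 0" "annihilates q f"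
    by blast
  let ?I = "range (\<lambda>r. r * q)"
  have "poly_ideal ?I"
    unfolding poly_ideal_def
    by (auto simp: image_iff distrib_right[symmetric] mult.assoc[symmetric] intro: exI[of _ 0])
  moreover have "?I \<noteq> {0}"
    using q(1) by (metis mult_1 rangeI singletonD)
  moreover have "\<forall>p\<in>?I. pairing f p = 0"
    using q(2) by (auto simp: annihilates_def)
  ultimately show "f \<in> sweedler"
    unfolding sweedler_def by blast
qed

lemma egf_shift_minus: "egf (\<lambda>n. f (Suc n) - m * f n) = deriv_minus m (egf f)"
  by (rule fps_ext) (simp add: deriv_minus_def fact_Suc field_simps del: of_nat_Suc)

lemma annihilates_linear_factor_iff_egf:
  "annihilates ([:-m, 1:] * q) (of_egf F) \<longleftrightarrow> annihilates q (of_egf (deriv_minus m F))"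
proof -
  have "(\<lambda>n. of_egf F (Suc n) - m * of_egf F n) = of_egf (deriv_minus m F)"
    by (metis egf_shift_minus of_egf_egf egf_of_egf)
  then show ?thesis
    by (simp only: annihilates_linear_factor_iff)
qed

lemma of_egf_add: "of_egf (F + G) = (\<lambda>n. of_egf F n + of_egf G n)"
  by (simp add: of_egf_def algebra_simps)

lemma of_egf_0: "of_egf 0 = (\<lambda>n. 0)"
  by (simp add: of_egf_def)

lemma annihilates_poly_exp:
  "annihilates ([:-m, 1:] ^ Suc k) (of_egf (fps_of_poly (monom c k) * fps_exp m))"
proof (induction k arbitrary: c)
  case 0
  have "deriv_minus m (fps_of_poly (monom c 0) * fps_exp m) = 0"
    by (simp add: deriv_minus_poly_exp pderiv_plus_def pderiv_monom)
  then show ?case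
    using annihilates_linear_factor_iff_egf[of m 1] by (simp add: of_egf_0 annihilates_zero)
next
  case (Suc k)
  have "deriv_minus m (fps_of_poly (monom c (Suc k)) * fps_exp m)
      = fps_of_poly (monom (of_nat (Suc k) * c) k) * fps_exp m"
    by (simp add: deriv_minus_poly_exp pderiv_plus_def pderiv_monom)
  then show ?case
    using Suc.IH by (simp only: power_Suc[of _ "Suc k"] annihilates_linear_factor_iff_egf)
qed

lemma quasi_poly_imp_annihilated:
  assumes "quasi_poly F"
  shows "\<exists>q. q \<noteq> 0 \<and> annihilates q (of_egf F)"
proof -
  obtain xs where "F = qval xs"
    using assms by (auto simp: quasi_poly_def)
  moreover have "\<exists>q. q \<noteq> 0 \<and> annihilates q (of_egf (qval xs))"
  proof (induction xs)
    case Nil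
    then show ?case
      by (intro exI[of _ 1]) (simp add: of_egf_0 annihilates_zero)
  next
    case (Cons x xs)
    obtain c k m where x: "x = (c, k, m)"
      by (cases x) auto
    obtain q where q: "q \<noteq> 0" "annihilates q (of_egf (qval xs))"
      using Cons.IH by blast
    let ?p = "[:-m, 1:] ^ Suc k"
    have "qterm x = fps_of_poly (monom c k) * fps_exp m"
      by (simp add: x qterm_def fps_of_poly_monom)
    then have "annihilates (q * ?p) (of_egf (qterm x))"
      using annihilates_mult[OF annihilates_poly_exp] by simp
    moreover have "annihilates (q * ?p) (of_egf (qval xs))"
      using annihilates_mult[OF q(2), of ?p] by (simp add: mult.commute)
    ultimately have "annihilates (q * ?p) (of_egf (qval (x # xs)))"
      by (simp add: of_egf_add annihilates_add)
    moreover have "?p \<noteq> 0"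
      by (rule power_not_zero) simp
    with q(1) have "q * ?p \<noteq> 0"
      by (metis mult_eq_0_iff)
    ultimately show ?case
      by blast
  qed
  ultimately show ?thesis
    by simp
qed

lemma fps_deriv_X_power_Suc:
  "fps_deriv (fps_X ^ Suc k :: 'a::comm_ring_1 fps) = fps_const (of_nat (Suc k)) * fps_X ^ k"
  by (rule fps_ext) auto

lemma quasi_poly_antiderivative_X_power: "\<exists>A. quasi_poly A \<and> fps_deriv A = fps_X ^ k"
proof -
  let ?A = "fps_const (1 / of_nat (Suc k)) * fps_X ^ Suc k :: complex fps"
  have "fps_deriv ?A = fps_const (1 / of_nat (Suc k) * of_nat (Suc k)) * fps_X ^ k"
    by (simp only: fps_deriv_mult_const_left fps_deriv_X_power_Suc mult.assoc[symmetric]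
        fps_const_mult)
  then have "fps_deriv ?A = fps_X ^ k"
    by (simp del: of_nat_Suc)
  then show ?thesis
    using quasi_poly_scale[OF quasi_poly_monomial[of "Suc k" 0]] by (intro exI[of _ ?A]) simp
qed

lemma quasi_poly_antiderivative_exp:
  assumes "v \<noteq> 0"
  shows "\<exists>A. quasi_poly A \<and> fps_deriv A = fps_X ^ k * fps_exp v"
proof (induction k)
  case 0
  have "fps_deriv (fps_const (1 / v) * fps_exp v) = fps_exp v"
    using assms by (simp add: mult.assoc[symmetric] flip: fps_const_mult)
  then show ?case
    using quasi_poly_scale[OF quasi_poly_exp]
    by (intro exI[of _ "fps_const (1 / v) * fps_exp v"]) simp
next
  case (Suc k)
  txt \<open>Integration by parts.\<close>
  obtain A where A: "quasi_poly A" "fps_deriv A = fps_X ^ k * fps_exp v"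
    using Suc.IH by blast
  let ?B = "fps_const (1 / v) * (fps_X ^ Suc k * fps_exp v - fps_const (of_nat (Suc k)) * A)"
  have dX: "fps_deriv (fps_X ^ Suc k * fps_exp v)
      = fps_const (of_nat (Suc k)) * fps_X ^ k * fps_exp v
        + fps_X ^ Suc k * (fps_const v * fps_exp v)"
    by (simp only: fps_deriv_mult fps_deriv_X_power_Suc fps_exp_deriv add.commute)
  have "fps_deriv ?B = fps_const (1 / v) *
      (fps_deriv (fps_X ^ Suc k * fps_exp v) - fps_const (of_nat (Suc k)) * fps_deriv A)"
    by (simp only: fps_deriv_mult_const_left fps_deriv_sub)
  also have "\<dots> = fps_const (1 / v) * (fps_const (of_nat (Suc k)) * fps_X ^ k * fps_exp v
      + fps_X ^ Suc k * (fps_const v * fps_exp v)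
      - fps_const (of_nat (Suc k)) * (fps_X ^ k * fps_exp v))"
    by (simp only: dX A(2))
  also have "\<dots> = fps_const (1 / v) * fps_const v * (fps_X ^ Suc k * fps_exp v)"
    by (simp only: algebra_simps)
  also have "\<dots> = fps_X ^ Suc k * fps_exp v"
    using assms by (simp flip: fps_const_mult)
  finally have "fps_deriv ?B = fps_X ^ Suc k * fps_exp v" .
  moreover have "quasi_poly ?B"
    by (intro quasi_poly_scale quasi_poly_diff quasi_poly_monomial A(1))
  ultimately show ?case
    by blast
qed

lemma quasi_poly_antiderivative: "\<exists>A. quasi_poly A \<and> fps_deriv A = fps_X ^ k * fps_exp v"
  using quasi_poly_antiderivative_X_power[of k] quasi_poly_antiderivative_exp[of v k]
  by (cases "v = 0") auto

lemma deriv_minus_onto_quasi_poly: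
  assumes "quasi_poly G"
  shows "\<exists>H. quasi_poly H \<and> deriv_minus l H = G"
proof -
  obtain xs where "G = qval xs"
    using assms by (auto simp: quasi_poly_def)
  moreover have "\<exists>H. quasi_poly H \<and> deriv_minus l H = qval xs"
  proof (induction xs)
    case Nil
    then show ?case
      using quasi_poly_0 by (intro exI[of _ 0]) (simp add: deriv_minus_def)
  next
    case (Cons x xs)
    obtain c k m where x: "x = (c, k, m)"
      by (cases x) auto
    obtain H where H: "quasi_poly H" "deriv_minus l H = qval xs"
      using Cons.IH by blast
    obtain A where A: "quasi_poly A" "fps_deriv A = fps_X ^ k * fps_exp (m - l)"
      using quasi_poly_antiderivative by blast
    let ?T = "fps_const c * (fps_exp l * A)"
    have "deriv_minus l ?T = fps_const c * (fps_exp l * fps_deriv A)"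
      by (simp add: deriv_minus_def fps_deriv_mult algebra_simps)
    also have "\<dots> = qterm x"
      by (simp add: A(2) x qterm_def algebra_simps flip: fps_exp_add_mult)
    finally have "deriv_minus l (?T + H) = qval (x # xs)"
      by (simp add: deriv_minus_add H(2))
    moreover have "quasi_poly (?T + H)"
      by (intro quasi_poly_add quasi_poly_scale quasi_poly_mult quasi_poly_exp A(1) H(1))
    ultimately show ?case
      by blast
  qed
  ultimately show ?thesis
    by simp
qed

lemma deriv_minus_eq_0D:
  assumes "deriv_minus l U = 0"
  shows "U = fps_const (U $ 0) * fps_exp l"
proof -
  let ?V = "fps_exp (-l) * U"
  have "fps_deriv ?V = fps_exp (-l) * deriv_minus l U"
    by (simp add: fps_deriv_mult deriv_minus_def algebra_simps flip: fps_const_neg)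
  with assms have "fps_deriv ?V = 0"
    by simp
  then have "?V = fps_const (?V $ 0)"
    by (rule fps_deriv_eq_0_iff[THEN iffD1])
  then have "fps_exp l * ?V = fps_const (U $ 0) * fps_exp l"
    by simp
  then show ?thesis
    by (simp add: mult.assoc[symmetric] flip: fps_exp_add_mult)
qed

lemma quasi_poly_if_deriv_minus:
  assumes "quasi_poly (deriv_minus l F)"
  shows "quasi_poly F"
proof -
  obtain H where H: "quasi_poly H" "deriv_minus l H = deriv_minus l F"
    using deriv_minus_onto_quasi_poly[OF assms] by blast
  then have "deriv_minus l (F - H) = 0"
    by (simp add: deriv_minus_def algebra_simps)
  then have "F = H + fps_const ((F - H) $ 0) * fps_exp l"
    by (metis deriv_minus_eq_0D add_diff_cancel_left' diff_add_cancel)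
  with H(1) show ?thesis
    by (metis quasi_poly_add quasi_poly_scale quasi_poly_exp)
qed

lemma annihilates_const_imp_zero:
  assumes "c \<noteq> 0" "annihilates [:c:] f"
  shows "f = (\<lambda>n. 0)"
proof
  fix m
  have "monom (1 / c) m * [:c:] = monom 1 m"
    using assms(1) by (simp add: mult.commute smult_monom)
  moreover have "pairing f (monom (1 / c) m * [:c:]) = 0"
    using assms(2) by (simp add: annihilates_def)
  ultimately show "f m = 0"
    by (simp add: pairing_monom)
qed

lemma annihilated_imp_quasi_poly:
  assumes "q \<noteq> 0" "annihilates q f"
  shows "quasi_poly (egf f)"
  using assms
proof (induction "degree q" arbitrary: q f rule: less_induct)
  case less
  show ?case
  proof (cases "degree q = 0")
    case True
    then obtain c where "q = [:c:]" "c \<noteq> 0"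
      using less.prems(1) by (metis degree_eq_zeroE pCons_0_0)
    with less.prems(2) have "f = (\<lambda>n. 0)"
      by (simp add: annihilates_const_imp_zero)
    then have "egf f = 0"
      by (intro fps_ext) simp
    then show ?thesis
      by (simp add: quasi_poly_0)
  next
    case False
    then obtain l where "poly q l = 0"
      by (metis fundamental_theorem_of_algebra constant_degree)
    then obtain q' where q': "q = [:-l, 1:] * q'"
      by (auto simp: poly_eq_0_iff_dvd elim: dvdE)
    with less.prems(1) have "q' \<noteq> 0"
      by auto
    moreover from \<open>q' \<noteq> 0\<close> have "degree q' < degree q"
      unfolding q' by (subst degree_mult_eq) auto
    moreover have "annihilates q' (\<lambda>n. f (Suc n) - l * f n)"
      using less.prems(2) q' annihilates_linear_factor_iff by simp
    ultimately have "quasi_poly (egf (\<lambda>n. f (Suc n) - l * f n))"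
      using less.hyps by blast
    then show ?thesis
      by (simp add: egf_shift_minus quasi_poly_if_deriv_minus)
  qed
qed

lemma sweedler_iff_quasi_poly: "f \<in> sweedler \<longleftrightarrow> quasi_poly (egf f)"
  using sweedler_iff_annihilates annihilated_imp_quasi_poly quasi_poly_imp_annihilated[of "egf f"]
  by auto

lemma in_cspanI: "(\<And>i. i < m \<Longrightarrow> v i \<in> S) \<Longrightarrow> (\<lambda>t. \<Sum>i<(m::nat). c i * v i t) \<in> cspan S"
  unfolding cspan_def by blast

lemma cspan_productsE:
  assumes "y \<in> cspan {h u w | u w. P u \<and> Q w}"
  obtains m u w c where "\<And>i. i < m \<Longrightarrow> P (u i) \<and> Q (w i)"
    and "y = (\<lambda>t. \<Sum>i<(m::nat). c i * h (u i) (w i) t)"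
proof -
  obtain m c v where v: "\<forall>i<(m::nat). \<exists>u w. v i = h u w \<and> P u \<and> Q w"
    and y: "y = (\<lambda>t. \<Sum>i<m. c i * v i t)"
    using assms unfolding cspan_def by blast
  then obtain u w where "\<forall>i<m. v i = h (u i) (w i) \<and> P (u i) \<and> Q (w i)"
    by metis
  with y show ?thesis
    using that[of m u w c] by simp
qed

lemma supp_lincomb: "supp (\<lambda>t. \<Sum>i<(m::nat). c i * v i t) \<subseteq> (\<Union>i<m. supp (v i))"
  by (auto simp: supp_def intro: ccontr)

section \<open>Two functionals on quasi-polynomials\<close>

definition qconst :: "qrep \<Rightarrow> complex" where
  "qconst xs = sum_list (map (\<lambda>(c, k, m). if k = 0 then c else 0) xs)"

text \<open>
  Reading \<open>c t^k exp(m t)\<close> as \<open>c \<xi>^k \<otimes> \<phi>\<^sub>m\<close>, \<open>qxi_coeff\<close> is \<open>d/d\<xi>|\<^bsub>\<xi>=0\<^esub> \<otimes> \<epsilon>\<^sub>a\<close> and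
  \<open>grp_part\<close> is \<open>(\<xi> \<mapsto> 0) \<otimes> id\<close>. By linear independence both only depend on the represented
  generating function.
\<close>

definition qxi_coeff :: "qrep \<Rightarrow> complex" where
  "qxi_coeff xs = sum_list (map (\<lambda>(c, k, m). if k = 1 then c else 0) xs)"

definition grp_part :: "qrep \<Rightarrow> complex \<Rightarrow> complex" where
  "grp_part xs = (\<lambda>v. qcoeff 0 v xs)"

definition exp_only :: "qrep \<Rightarrow> bool" where
  "exp_only xs \<longleftrightarrow> (\<forall>(c, k, m)\<in>set xs. k = 0)"

lemma qconst_eq_nth_0: "qconst xs = qval xs $ 0"
  by (induction xs) (auto simp: qconst_def qterm_def)

lemma qxi_coeff_Nil [simp]: "qxi_coeff [] = 0"
  by (simp add: qxi_coeff_def)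

lemma qxi_coeff_Cons [simp]: "qxi_coeff ((c, k, m) # xs) = (if k = 1 then c else 0) + qxi_coeff xs"
  by (simp add: qxi_coeff_def)

lemma qxi_coeff_append [simp]: "qxi_coeff (xs @ ys) = qxi_coeff xs + qxi_coeff ys"
  by (simp add: qxi_coeff_def)

lemma qxi_coeff_qscale [simp]: "qxi_coeff (qscale a xs) = a * qxi_coeff xs"
  by (induction xs) (auto simp: qscale_def algebra_simps)

lemma qxi_coeff_unique:
  assumes "qval xs = qval ys"
  shows "qxi_coeff xs = qxi_coeff ys"
proof -
  have "qxi_coeff zs = (\<Sum>v\<in>qexps xs \<union> qexps ys. qcoeff 1 v zs)"
    if "qexps zs \<subseteq> qexps xs \<union> qexps ys" for zs
    using sum_qcoeff[of _ zs "\<lambda>v a. a"] that by (simp add: qxi_coeff_def)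
  then show ?thesis
    using qcoeff_unique[OF assms] by simp
qed

lemma qxi_coeff_qprod:
  "qxi_coeff (qprod xs ys) = qxi_coeff xs * qconst ys + qconst xs * qxi_coeff ys"
proof -
  have "qxi_coeff (map (qterm_mult (c, k, m)) ys)
      = (if k = 0 then c * qxi_coeff ys else if k = 1 then c * qconst ys else 0)" for c k m
    by (induction ys) (auto simp: qterm_mult_def qconst_def algebra_simps)
  then show ?thesis
    by (induction xs) (auto simp: qprod_def qconst_def algebra_simps)
qed

lemma qxi_coeff_exp_only: "exp_only xs \<Longrightarrow> qxi_coeff xs = 0"
  by (induction xs) (auto simp: exp_only_def)

lemma exp_only_qprod: "exp_only xs \<Longrightarrow> exp_only ys \<Longrightarrow> exp_only (qprod xs ys)"
  by (fastforce simp: exp_only_def qprod_def qterm_mult_def)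

lemma supp_grp_part: "supp (grp_part xs) \<subseteq> qexps xs"
proof
  fix v
  assume "v \<in> supp (grp_part xs)"
  then have "qcoeff 0 v xs \<noteq> 0"
    by (simp add: supp_def grp_part_def)
  then show "v \<in> qexps xs"
    by (induction xs) (auto split: if_splits)
qed

lemma grp_part_in_grp_alg: "grp_part xs \<in> grp_alg"
  using supp_grp_part finite_subset finite_qexps unfolding grp_alg_def by blast

lemma sum_supp_eq:
  fixes x :: "'a \<Rightarrow> complex"
  assumes "finite T" "supp x \<subseteq> T" "\<And>l. \<phi> l 0 = 0"
  shows "(\<Sum>l\<in>supp x. \<phi> l (x l)) = (\<Sum>l\<in>T. \<phi> l (x l))"
  by (rule sum.mono_neutral_left) (use assms in \<open>auto simp: supp_def\<close>)

lemma eps_a_grp_part: "eps_a (grp_part xs) = qconst xs"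
proof -
  have "eps_a (grp_part xs) = (\<Sum>l\<in>qexps xs. qcoeff 0 l xs)"
    unfolding eps_a_def using sum_supp_eq[OF finite_qexps supp_grp_part, of "\<lambda>l a. a"]
    by (simp add: grp_part_def)
  also have "\<dots> = qconst xs"
    using sum_qcoeff[of _ xs "\<lambda>v a. a" 0] by (simp add: qconst_def)
  finally show ?thesis .
qed

lemma grp_part_qprod: "grp_part (qprod xs ys) = ga_mult (grp_part xs) (grp_part ys)"
proof
  fix v
  have qcoeff_map: "qcoeff 0 v (map (qterm_mult (c, k, m)) ys)
      = (if k = 0 then c * qcoeff 0 (v - m) ys else 0)" for c k m
    by (induction ys) (auto simp: qterm_mult_def algebra_simps)
  have "ga_mult (grp_part xs) (grp_part ys) v = (\<Sum>l\<in>qexps xs. qcoeff 0 l xs * qcoeff 0 (v - l) ys)"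
    unfolding ga_mult_def
    using sum_supp_eq[OF finite_qexps supp_grp_part, of "\<lambda>l a. a * qcoeff 0 (v - l) ys"]
    by (simp add: grp_part_def)
  also have "\<dots> = sum_list (map (\<lambda>(c, k', m). if k' = 0 then c * qcoeff 0 (v - m) ys else 0) xs)"
    by (rule sum_qcoeff) (auto simp: distrib_right)
  also have "\<dots> = qcoeff 0 v (qprod xs ys)"
    by (induction xs) (auto simp: qprod_def qcoeff_map)
  finally show "grp_part (qprod xs ys) v = ga_mult (grp_part xs) (grp_part ys) v"
    by (simp add: grp_part_def)
qed

lemma qval_concat: "qval (concat xss) = sum_list (map qval xss)"
  by (induction xss) simp_all

lemma qxi_coeff_concat: "qxi_coeff (concat xss) = sum_list (map qxi_coeff xss)"
  by (induction xss) simp_all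

lemma qcoeff_concat: "qcoeff k v (concat xss) = sum_list (map (qcoeff k v) xss)"
  by (induction xss) simp_all

section \<open>The group algebra inside the Sweedler dual\<close>

definition ga_embed :: "(complex \<Rightarrow> complex) \<Rightarrow> dual" where
  "ga_embed x = (\<lambda>n. \<Sum>l\<in>supp x. x l * l ^ n)"

lemma Psi_one_tensor: "Psi (one_tensor x) = ga_embed x"
proof
  fix n
  have supp_eq: "supp (one_tensor x) = (\<lambda>l. (0, l)) ` supp x"
    by (auto simp: supp_def one_tensor_def split: if_splits)
  have "Psi (one_tensor x) n = (\<Sum>l\<in>supp x. one_tensor x (0, l) * conv eps (phi l) n)"
    unfolding Psi_def supp_eq by (subst sum.reindex) (auto simp: inj_on_def)
  then show "Psi (one_tensor x) n = ga_embed x n"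
    by (simp add: ga_embed_def one_tensor_def conv_eps_left phi_def)
qed

lemma Theta_eq: "Theta c x = (\<lambda>n. c * xi n + ga_embed x n)"
  by (simp add: Theta_def Psi_one_tensor)

lemma egf_ga_embed: "egf (ga_embed x) = (\<Sum>l\<in>supp x. fps_const (x l) * fps_exp l)"
  by (rule fps_ext) (simp add: ga_embed_def fps_sum_nth sum_divide_distrib)

lemma egf_ga_embed_grp_part:
  "egf (ga_embed (grp_part zs))
     = sum_list (map (\<lambda>(c, k, m). if k = 0 then fps_const c * fps_exp m else 0) zs)"
proof -
  have "egf (ga_embed (grp_part zs)) = (\<Sum>l\<in>qexps zs. fps_const (qcoeff 0 l zs) * fps_exp l)"
    unfolding egf_ga_embed
    using sum_supp_eq[OF finite_qexps supp_grp_part, of "\<lambda>l a. fps_const a * fps_exp l"]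
    by (simp add: grp_part_def)
  also have "\<dots> = sum_list (map (\<lambda>(c, k, m). if k = 0 then fps_const c * fps_exp m else 0) zs)"
    by (rule sum_qcoeff) (auto simp: distrib_right simp flip: fps_const_add)
  finally show ?thesis .
qed

lemma qval_exp_only: "exp_only zs \<Longrightarrow> qval zs = egf (ga_embed (grp_part zs))"
  unfolding egf_ga_embed_grp_part
  by (induction zs) (auto simp: exp_only_def qterm_def)

lemma grp_alg_qrep:
  assumes "x \<in> grp_alg"
  obtains xs where "exp_only xs" "grp_part xs = x"
proof -
  obtain L where L: "distinct L" "set L = supp x"
    using assms finite_distinct_list by (auto simp: grp_alg_def)
  let ?xs = "map (\<lambda>l. (x l, 0, l)) L"
  have "grp_part ?xs v = x v" for v
  proof -
    have "grp_part ?xs v = sum_list (map (\<lambda>l. if l = v then x l else 0) L)"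
      by (induction L) (simp_all add: grp_part_def)
    also have "\<dots> = (\<Sum>l\<in>supp x. if l = v then x l else 0)"
      using L by (simp add: sum_list_distinct_conv_sum_set)
    also have "\<dots> = x v"
      using assms by (simp add: grp_alg_def supp_def)
    finally show ?thesis .
  qed
  moreover have "exp_only ?xs"
    by (auto simp: exp_only_def)
  ultimately show ?thesis
    using that by blast
qed

lemma ga_mult_in_grp_alg:
  assumes "x \<in> grp_alg" "y \<in> grp_alg"
  shows "ga_mult x y \<in> grp_alg"
proof -
  obtain xs ys where "grp_part xs = x" "grp_part ys = y"
    using grp_alg_qrep[OF assms(1)] grp_alg_qrep[OF assms(2)] by metis
  then show ?thesis
    using grp_part_in_grp_alg[of "qprod xs ys"] by (simp add: grp_part_qprod)
qed

lemma ga_embed_ga_mult: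
  assumes "x \<in> grp_alg" "y \<in> grp_alg"
  shows "ga_embed (ga_mult x y) = conv (ga_embed x) (ga_embed y)"
proof -
  obtain xs ys where xs: "exp_only xs" "grp_part xs = x" and ys: "exp_only ys" "grp_part ys = y"
    using grp_alg_qrep[OF assms(1)] grp_alg_qrep[OF assms(2)] by metis
  have "egf (ga_embed (ga_mult x y)) = qval (qprod xs ys)"
    using qval_exp_only[OF exp_only_qprod[OF xs(1) ys(1)]] by (simp add: grp_part_qprod xs ys)
  also have "\<dots> = egf (conv (ga_embed x) (ga_embed y))"
    by (simp add: qval_qprod egf_conv qval_exp_only xs ys)
  finally show ?thesis
    by (simp add: egf_inject)
qed

lemma ga_embed_lincomb:
  assumes "\<And>i. i < m \<Longrightarrow> w i \<in> grp_alg"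
  shows "ga_embed (\<lambda>t. \<Sum>i<(m::nat). c i * w i t) = (\<lambda>n. \<Sum>i<m. c i * ga_embed (w i) n)"
proof
  fix n
  let ?T = "\<Union>i<m. supp (w i)"
  have "finite ?T"
    using assms by (auto simp: grp_alg_def)
  then have ga_embed_T: "ga_embed z n = (\<Sum>l\<in>?T. z l * l ^ n)" if "supp z \<subseteq> ?T" for z
    unfolding ga_embed_def by (rule sum_supp_eq) (use that in auto)
  have "ga_embed (\<lambda>t. \<Sum>i<m. c i * w i t) n = (\<Sum>i<m. c i * (\<Sum>l\<in>?T. w i l * l ^ n))"
    by (simp add: ga_embed_T supp_lincomb sum_distrib_right sum_distrib_left sum.swap[of _ ?T]
        algebra_simps)
  also have "\<dots> = (\<Sum>i<m. c i * ga_embed (w i) n)"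
  proof (intro sum.cong refl)
    fix i
    assume "i \<in> {..<m}"
    then have "supp (w i) \<subseteq> ?T"
      by blast
    then show "c i * (\<Sum>l\<in>?T. w i l * l ^ n) = c i * ga_embed (w i) n"
      by (simp add: ga_embed_T)
  qed
  finally show "ga_embed (\<lambda>t. \<Sum>i<m. c i * w i t) n = (\<Sum>i<m. c i * ga_embed (w i) n)" .
qed

section \<open>The ideals \<open>J\<close> and \<open>J\<^sup>2\<close>\<close>

lemma J_iff_quasi_poly: "f \<in> J \<longleftrightarrow> quasi_poly (egf f) \<and> egf f $ 0 = 0"
  by (simp add: J_def sweedler_iff_quasi_poly)

lemma J_qrep:
  assumes "f \<in> J"
  obtains xs where "egf f = qval xs" "qconst xs = 0"
proof -
  obtain xs where "egf f = qval xs"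
    using assms by (auto simp: J_iff_quasi_poly quasi_poly_def)
  moreover from this have "qconst xs = 0"
    using assms by (simp add: J_iff_quasi_poly qconst_eq_nth_0)
  ultimately show ?thesis
    using that by blast
qed

lemma grp_part_in_ker_a: "qconst xs = 0 \<Longrightarrow> grp_part xs \<in> ker_a"
  by (simp add: ker_a_def grp_part_in_grp_alg eps_a_grp_part)

lemma egf_Theta: "egf (Theta c x) = fps_const c * fps_X + egf (ga_embed x)"
proof -
  have "egf (\<lambda>n. c * xi n) = fps_const c * egf xi"
    by (rule fps_ext) simp
  then show ?thesis
    by (simp add: Theta_eq egf_add egf_xi)
qed

lemma Theta_in_J:
  assumes "x \<in> ker_a"
  shows "Theta c x \<in> J"
proof -
  have "x \<in> grp_alg" "eps_a x = 0"
    using assms by (auto simp: ker_a_def)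
  then have "quasi_poly (egf (Theta c x))"
    unfolding egf_Theta egf_ga_embed grp_alg_def
    by (intro quasi_poly_add quasi_poly_scale quasi_poly_X quasi_poly_sum quasi_poly_exp)
  moreover have "egf (Theta c x) $ 0 = 0"
    using \<open>eps_a x = 0\<close> by (simp add: Theta_eq xi_def ga_embed_def eps_a_def)
  ultimately show ?thesis
    by (simp add: J_iff_quasi_poly)
qed

lemma ga_embed_in_J: "x \<in> ker_a \<Longrightarrow> ga_embed x \<in> J"
  using Theta_in_J[of x 0] by (simp add: Theta_eq)

lemma Theta_in_J2_if_ker_a2:
  assumes "x \<in> ker_a2"
  shows "Theta 0 x \<in> J2"
proof -
  obtain m u w c where uw: "\<And>i. i < (m::nat) \<Longrightarrow> u i \<in> ker_a \<and> w i \<in> ker_a"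
    and x: "x = (\<lambda>t. \<Sum>i<m. c i * ga_mult (u i) (w i) t)"
    using assms unfolding ker_a2_def by (rule cspan_productsE) auto
  then have "Theta 0 x = (\<lambda>n. \<Sum>i<m. c i * ga_embed (ga_mult (u i) (w i)) n)"
    by (simp add: Theta_eq ga_embed_lincomb ga_mult_in_grp_alg ker_a_def)
  also have "\<dots> = (\<lambda>n. \<Sum>i<m. c i * conv (ga_embed (u i)) (ga_embed (w i)) n)"
    using uw by (auto simp: ker_a_def ga_embed_ga_mult intro!: sum.cong)
  also have "\<dots> \<in> J2"
    unfolding J2_def
    using uw ga_embed_in_J by (intro in_cspanI) blast
  finally show ?thesis .
qed

lemma J2_qrep:
  assumes "f \<in> J2"
  obtains zs where "egf f = qval zs" "qxi_coeff zs = 0" "grp_part zs \<in> ker_a2"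
proof -
  obtain m u w c where uw: "\<And>i. i < (m::nat) \<Longrightarrow> u i \<in> J \<and> w i \<in> J"
    and f: "f = (\<lambda>t. \<Sum>i<m. c i * conv (u i) (w i) t)"
    using assms unfolding J2_def by (rule cspan_productsE) auto
  have "\<forall>i<m. \<exists>p. egf (u i) = qval (fst p) \<and> qconst (fst p) = 0
      \<and> egf (w i) = qval (snd p) \<and> qconst (snd p) = 0"
    using uw J_qrep by (metis fst_conv snd_conv)
  then obtain p where p: "\<And>i. i < m \<Longrightarrow> egf (u i) = qval (fst (p i)) \<and> qconst (fst (p i)) = 0
      \<and> egf (w i) = qval (snd (p i)) \<and> qconst (snd (p i)) = 0"
    by metis
  define zs where "zs = concat (map (\<lambda>i. qscale (c i) (qprod (fst (p i)) (snd (p i)))) [0..<m])"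
  have "egf f = (\<Sum>i<m. fps_const (c i) * (egf (u i) * egf (w i)))"
    by (simp add: f egf_lincomb egf_conv)
  also have "\<dots> = (\<Sum>i<m. fps_const (c i) * (qval (fst (p i)) * qval (snd (p i))))"
    by (intro sum.cong refl) (simp add: p)
  also have "\<dots> = qval zs"
    by (simp add: zs_def qval_concat interv_sum_list_conv_sum_set_nat atLeast0LessThan
        qval_qscale qval_qprod)
  finally have "egf f = qval zs" .
  moreover have "qxi_coeff zs = 0"
    by (simp add: zs_def qxi_coeff_concat interv_sum_list_conv_sum_set_nat atLeast0LessThan
        qxi_coeff_qprod p)
  moreover have "grp_part zs \<in> ker_a2"
  proof -
    have "grp_part zs v = (\<Sum>i<m. c i * grp_part (qprod (fst (p i)) (snd (p i))) v)" for v
      by (simp add: zs_def grp_part_def qcoeff_concat interv_sum_list_conv_sum_set_nat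
          atLeast0LessThan)
    then have "grp_part zs
        = (\<lambda>v. \<Sum>i<m. c i * ga_mult (grp_part (fst (p i))) (grp_part (snd (p i))) v)"
      by (simp add: grp_part_qprod fun_eq_iff)
    then show ?thesis
      unfolding ker_a2_def using p grp_part_in_ker_a by (auto intro!: in_cspanI)
  qed
  ultimately show ?thesis
    using that by blast
qed

lemma Theta_in_J2D:
  assumes "x \<in> ker_a" "Theta c x \<in> J2"
  shows "c = 0 \<and> x \<in> ker_a2"
proof -
  obtain zs where zs: "egf (Theta c x) = qval zs" "qxi_coeff zs = 0" "grp_part zs \<in> ker_a2"
    using assms(2) by (rule J2_qrep)
  obtain xs where xs: "exp_only xs" "grp_part xs = x"
    using assms(1) grp_alg_qrep by (auto simp: ker_a_def)
  have eq: "qval ((c, 1, 0) # xs) = qval zs"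
    using xs by (simp add: qterm_def egf_Theta qval_exp_only zs(1)[symmetric])
  have "c = qxi_coeff ((c, 1, 0) # xs)"
    by (simp add: qxi_coeff_exp_only xs(1))
  also have "\<dots> = 0"
    using qxi_coeff_unique[OF eq] zs(2) by simp
  finally have "c = 0" .
  moreover have "x = grp_part zs"
    using qcoeff_unique[OF eq, of 0] xs(2) by (auto simp: grp_part_def)
  ultimately show ?thesis
    using zs(3) by simp
qed

definition X_quotient :: "nat \<Rightarrow> complex \<Rightarrow> complex fps" where
  "X_quotient k m =
    (if k = 0 then 0 else if k = 1 then fps_exp m - 1 else fps_X ^ (k - 1) * fps_exp m)"

lemma X_times_X_quotient:
  "fps_X * X_quotient k m
     = fps_X ^ k * fps_exp m - (if k = 1 then fps_X else 0) - (if k = 0 then fps_exp m else 0)"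
  by (cases k) (auto simp: X_quotient_def algebra_simps power_Suc[symmetric] simp del: power_Suc)

lemma sum_list_X_quotient:
  "sum_list (map (\<lambda>(c, k, m). fps_const c * (fps_X * X_quotient k m)) xs)
     = qval xs - fps_const (qxi_coeff xs) * fps_X - egf (ga_embed (grp_part xs))"
  unfolding egf_ga_embed_grp_part
proof (induction xs)
  case (Cons x xs)
  obtain c k m where x: "x = (c, k, m)"
    by (cases x) auto
  have "fps_const (if k = 1 then c else 0) * fps_X = (if k = 1 then fps_const c * fps_X else 0)"
    by simp
  with Cons.IH show ?case
    by (simp add: x X_times_X_quotient qterm_def algebra_simps flip: fps_const_add)
qed simp

lemma of_egf_X_quotient_in_J: "of_egf (X_quotient k m) \<in> J"
  by (simp add: J_iff_quasi_poly X_quotient_def quasi_poly_0 quasi_poly_diff quasi_poly_exp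
      quasi_poly_1 quasi_poly_monomial)

lemma xi_in_J: "xi \<in> J"
  by (simp add: J_iff_quasi_poly egf_xi quasi_poly_X)

lemma J_mod_J2_in_range_Theta:
  assumes "f \<in> J"
  shows "\<exists>c x. x \<in> ker_a \<and> (\<lambda>n. f n - Theta c x n) \<in> J2"
proof -
  obtain xs where xs: "egf f = qval xs" "qconst xs = 0"
    using assms by (rule J_qrep)
  define c where "c = qxi_coeff xs"
  define x where "x = grp_part xs"
  define a where "a i = fst (xs ! i)" for i
  define w where "w i = of_egf (X_quotient (fst (snd (xs ! i))) (snd (snd (xs ! i))))" for i
  have "egf (\<lambda>t. \<Sum>i<length xs. a i * conv xi (w i) t)
      = sum_list (map (\<lambda>(c, k, m). fps_const c * (fps_X * X_quotient k m)) xs)"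
    by (simp add: egf_lincomb egf_conv egf_xi a_def w_def sum_list_sum_nth atLeast0LessThan
        case_prod_unfold)
  also have "\<dots> = egf (\<lambda>n. f n - Theta c x n)"
    by (simp add: sum_list_X_quotient egf_diff egf_Theta xs(1) c_def x_def)
  finally have "(\<lambda>n. f n - Theta c x n) = (\<lambda>t. \<Sum>i<length xs. a i * conv xi (w i) t)"
    by (simp add: egf_inject)
  also have "\<dots> \<in> J2"
    unfolding J2_def using xi_in_J of_egf_X_quotient_in_J by (auto simp: w_def intro!: in_cspanI)
  finally show ?thesis
    using grp_part_in_ker_a[OF xs(2)] x_def by blast
qed

theorem lemma3p3:
  shows "(\<forall>c x. x \<in> ker_a \<longrightarrow> Theta c x \<in> J)
       \<and> (\<forall>c x. x \<in> ker_a \<longrightarrow> (Theta c x \<in> J2 \<longleftrightarrow> c = 0 \<and> x \<in> ker_a2))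
       \<and> (\<forall>f\<in>J. \<exists>c x. x \<in> ker_a \<and> (\<lambda>n. f n - Theta c x n) \<in> J2)"
  using Theta_in_J Theta_in_J2D Theta_in_J2_if_ker_a2 J_mod_J2_in_range_Theta by blast

end
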